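(* For integers $n$ and $a$ with $n\ge a$, $$J\mathcal{G}_{n+a}^{(3)}J\mathcal{G}_{n-a}^{(3)}-\left[J\mathcal{G}_{n}^{(3)}\right]^{2}=\frac{1}{49}\Big\{2^{n+1}\left[\Theta Y_{n-a}(a)-2^{-a}Y_{n}(a)\Theta\right]-X_{a}\left[X_{a}\Xi-14X_{a+1}\Omega\right]\Big\}$$ and $$K\mathcal{G}_{n+a}^{(3)}K\mathcal{G}_{n-a}^{(3)}-\left[K\mathcal{G}_{n}^{(3)}\right]^{2}=2^{n}\left[\Theta Y^{*}_{n-a}(a)-2^{-a}Y^{*}_{n}(a)\Theta\right]-X_{a}\left[X_{a}\Xi^{*}-6X_{a+1}\Omega\right],$$ where $Y_{n}(a)=X_{n}(2^{a}\mathbf{A}+X_{a+2}\mathbf{A}-X_{a}\mathbf{B})-X_{n+1}(2^{a}\mathbf{B}+X_{a}\mathbf{A}-X_{a+1}\mathbf{B})$, $Y^{*}_{n}(a)=X_{n}(2^{a}\mathbf{C}+X_{a+2}\mathbf{C}-X_{a}\mathbf{D})-X_{n+1}(2^{a}\mathbf{D}+X_{a}\mathbf{C}-X_{a+1}\mathbf{D})$, $\Xi=\mathbf{A}^2+\mathbf{A}\mathbf{B}+\mathbf{B}^2$ and $\Xi^{*}=\mathbf{C}^2+\mathbf{C}\mathbf{D}+\mathbf{D}^2$.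
   Context: Fix real numbers $\lambda_1,\lambda_2,\lambda_3$. The algebra $\mathbb{H}_{\lambda_1,\lambda_2,\lambda_3}$ of 3-parameter generalized quaternions is the real associative algebra of elements $\psi_0+\psi_1\mathbf{e}_1+\psi_2\mathbf{e}_2+\psi_3\mathbf{e}_3$ ($\psi_i\in\mathbb{R}$) with $\mathbf{e}_1^2=-\lambda_1\lambda_2$, $\mathbf{e}_2^2=-\lambda_1\lambda_3$, $\mathbf{e}_3^2=-\lambda_2\lambda_3$, $\mathbf{e}_1\mathbf{e}_2=-\mathbf{e}_2\mathbf{e}_1=\lambda_1\mathbf{e}_3$, $\mathbf{e}_1\mathbf{e}_3=-\mathbf{e}_3\mathbf{e}_1=-\lambda_2\mathbf{e}_2$, $\mathbf{e}_2\mathbf{e}_3=-\mathbf{e}_3\mathbf{e}_2=\lambda_3\mathbf{e}_1$. The third-order Jacobsthal numbers satisfy $J_0^{(3)}=0$, $J_1^{(3)}=J_2^{(3)}=1$, $J_n^{(3)}=J_{n-1}^{(3)}+J_{n-2}^{(3)}+2J_{n-3}^{(3)}$; the modified third-order Jacobsthal numbers satisfy $K_0^{(3)}=3$, $K_1^{(3)}=1$, $K_2^{(3)}=3$, $K_n^{(3)}=K_{n-1}^{(3)}+K_{n-2}^{(3)}+2K_{n-3}^{(3)}$; both are extended to all integers $n$ by running the recurrence backwards (equivalently by the Binet formulas $J_n^{(3)}=\frac17[2^{n+1}+X_n-2X_{n+1}]$, $K_n^{(3)}=2^n+X_n+2X_{n+1}$). For all integers $n$ define $J\mathcal{G}_n^{(3)}=J_n^{(3)}+J_{n+1}^{(3)}\mathbf{e}_1+J_{n+2}^{(3)}\mathbf{e}_2+J_{n+3}^{(3)}\mathbf{e}_3$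 and $K\mathcal{G}_n^{(3)}=K_n^{(3)}+K_{n+1}^{(3)}\mathbf{e}_1+K_{n+2}^{(3)}\mathbf{e}_2+K_{n+3}^{(3)}\mathbf{e}_3$. Here $X_n=0,1,-1$ according as $n\equiv0,1,2\pmod 3$, $\Theta=1+2\mathbf{e}_1+4\mathbf{e}_2+8\mathbf{e}_3$, $\mathbf{A}=1+2\mathbf{e}_1-3\mathbf{e}_2+\mathbf{e}_3$, $\mathbf{B}=2-3\mathbf{e}_1+\mathbf{e}_2+2\mathbf{e}_3$, $\mathbf{C}=1-2\mathbf{e}_1+\mathbf{e}_2+\mathbf{e}_3$, $\mathbf{D}=-2+\mathbf{e}_1+\mathbf{e}_2-2\mathbf{e}_3$, and $\Omega=\lambda_3\mathbf{e}_1+\lambda_2\mathbf{e}_2+\lambda_1\mathbf{e}_3$. *)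

theory Defs
  imports Complex_Main
begin

text \<open>An element psi0 + psi1 e1 + psi2 e2 + psi3 e3 is represented by its four
  real coordinates.  The multiplication depends on the parameters l1 l2 l3.\<close>

datatype gq = GQ (c0: real) (c1: real) (c2: real) (c3: real)

definition gadd :: "gq \<Rightarrow> gq \<Rightarrow> gq" where
  "gadd p q = GQ (c0 p + c0 q) (c1 p + c1 q) (c2 p + c2 q) (c3 p + c3 q)"

definition gsub :: "gq \<Rightarrow> gq \<Rightarrow> gq" where
  "gsub p q = GQ (c0 p - c0 q) (c1 p - c1 q) (c2 p - c2 q) (c3 p - c3 q)"

definition gscale :: "real \<Rightarrow> gq \<Rightarrow> gq" where
  "gscale r q = GQ (r * c0 q) (r * c1 q) (r * c2 q) (r * c3 q)"

text \<open>Bilinear extension of the multiplication table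
  e1^2 = -l1 l2, e2^2 = -l1 l3, e3^2 = -l2 l3,
  e1 e2 = -e2 e1 = l1 e3, e1 e3 = -e3 e1 = -l2 e2, e2 e3 = -e3 e2 = l3 e1.\<close>
definition gmul :: "real \<Rightarrow> real \<Rightarrow> real \<Rightarrow> gq \<Rightarrow> gq \<Rightarrow> gq" where
  "gmul l1 l2 l3 p q = GQ
     (c0 p * c0 q - l1 * l2 * c1 p * c1 q - l1 * l3 * c2 p * c2 q - l2 * l3 * c3 p * c3 q)
     (c0 p * c1 q + c1 p * c0 q + l3 * (c2 p * c3 q - c3 p * c2 q))
     (c0 p * c2 q + c2 p * c0 q + l2 * (c3 p * c1 q - c1 p * c3 q))
     (c0 p * c3 q + c3 p * c0 q + l1 * (c1 p * c2 q - c2 p * c1 q))"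

function Jac3 :: "int \<Rightarrow> real" where
  "Jac3 n = (if n = 0 then 0 else if n = 1 then 1 else if n = 2 then 1
             else if n > 2 then Jac3 (n - 1) + Jac3 (n - 2) + 2 * Jac3 (n - 3)
             else (Jac3 (n + 3) - Jac3 (n + 2) - Jac3 (n + 1)) / 2)"
  by auto
termination
  by (relation "measure (\<lambda>n. nat \<bar>n - 1\<bar>)") auto

function MJac3 :: "int \<Rightarrow> real" where
  "MJac3 n = (if n = 0 then 3 else if n = 1 then 1 else if n = 2 then 3
             else if n > 2 then MJac3 (n - 1) + MJac3 (n - 2) + 2 * MJac3 (n - 3)
             else (MJac3 (n + 3) - MJac3 (n + 2) - MJac3 (n + 1)) / 2)"
  by auto
termination
  by (relation "measure (\<lambda>n. nat \<bar>n - 1\<bar>)") auto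

declare Jac3.simps[simp del] MJac3.simps[simp del]

definition JG :: "int \<Rightarrow> gq" where
  "JG n = GQ (Jac3 n) (Jac3 (n + 1)) (Jac3 (n + 2)) (Jac3 (n + 3))"

definition KG :: "int \<Rightarrow> gq" where
  "KG n = GQ (MJac3 n) (MJac3 (n + 1)) (MJac3 (n + 2)) (MJac3 (n + 3))"

definition Xs :: "int \<Rightarrow> real" where
  "Xs n = (if n mod 3 = 0 then 0 else if n mod 3 = 1 then 1 else -1)"

definition Theta :: gq where "Theta = GQ 1 2 4 8"
definition qA :: gq where "qA = GQ 1 2 (-3) 1"
definition qB :: gq where "qB = GQ 2 (-3) 1 2"
definition qC :: gq where "qC = GQ 1 (-2) 1 1"
definition qD :: gq where "qD = GQ (-2) 1 1 (-2)"

definition Omega :: "real \<Rightarrow> real \<Rightarrow> real \<Rightarrow> gq" where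
  "Omega l1 l2 l3 = GQ 0 l3 l2 l1"

definition Yg :: "gq \<Rightarrow> gq \<Rightarrow> int \<Rightarrow> int \<Rightarrow> gq" where
  "Yg P Q n a =
     gsub (gscale (Xs n) (gsub (gadd (gscale (2 powi a) P) (gscale (Xs (a + 2)) P)) (gscale (Xs a) Q)))
          (gscale (Xs (n + 1)) (gsub (gadd (gscale (2 powi a) Q) (gscale (Xs a) P)) (gscale (Xs (a + 1)) Q)))"

definition Y :: "int \<Rightarrow> int \<Rightarrow> gq" where "Y n a = Yg qA qB n a"
definition Ystar :: "int \<Rightarrow> int \<Rightarrow> gq" where "Ystar n a = Yg qC qD n a"

definition Xi :: "real \<Rightarrow> real \<Rightarrow> real \<Rightarrow> gq" where
  "Xi l1 l2 l3 = gadd (gadd (gmul l1 l2 l3 qA qA) (gmul l1 l2 l3 qA qB)) (gmul l1 l2 l3 qB qB)"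

definition Xistar :: "real \<Rightarrow> real \<Rightarrow> real \<Rightarrow> gq" where
  "Xistar l1 l2 l3 = gadd (gadd (gmul l1 l2 l3 qC qC) (gmul l1 l2 l3 qC qD)) (gmul l1 l2 l3 qD qD)"

end

theory Submission
  imports Defs "HOL-Analysis.Linear_Algebra"
begin

(* Both sequences have Binet forms
     7 JG m = 2^(m+1) Theta + X_m A - X_(m+1) B   and   KG m = 2^m Theta + X_m C - X_(m+1) D,
   because 2^m and the 3-periodic X_m span the solutions of the recurrence, whose characteristic
   polynomial is (x - 2)(x^2 + x + 1).  Expanding G(n+a) G(n-a) - G(n)^2 using only bilinearity
   of the product, the Theta^2 terms cancel since
   2^(n+a) 2^(n-a) = 2^(2n), and the mixed terms regroup into Y_m(a) = 2^a W_m - W_(m+a), where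
   W_m = X_m P - X_(m+1) Q.  The purely periodic part reduces, by Catalan-type identities for X,
   to X_a X_(a+1) (QP - PQ) - X_a^2 (P^2 + PQ + Q^2), and the commutators are
   BA - AB = 14 Omega and DC - CD = 6 Omega. *)

lemma int_mod3_cases:
  fixes k :: int
  obtains "k mod 3 = 0" | "k mod 3 = 1" | "k mod 3 = 2"
proof -
  have "k mod 3 = 0 \<or> k mod 3 = 1 \<or> k mod 3 = 2" by presburger
  then show thesis using that by auto
qed

lemmas Xs_residue_simps =
  Xs_def mod_add_eq[symmetric] mod_diff_eq[symmetric] mod_add_left_eq[symmetric]

lemma Xs_shifts:
  "Xs (m + 2) = - Xs m - Xs (m + 1)" "Xs (m + 3) = Xs m"
  "Xs (m + 1 + 1) = - Xs m - Xs (m + 1)" "Xs (m + 2 + 1) = Xs m" "Xs (m + 3 + 1) = Xs (m + 1)"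
  by (cases m rule: int_mod3_cases; simp add: Xs_residue_simps)+

lemma Xs_add: "Xs (n + a) = Xs (n + 1) * Xs a - Xs n * Xs (a + 2)"
  by (cases n rule: int_mod3_cases; cases a rule: int_mod3_cases)
    (simp_all add: Xs_residue_simps)

lemma Xs_add_plus_one: "Xs (n + a + 1) = Xs (n + 1) * Xs (a + 1) - Xs n * Xs a"
  by (cases n rule: int_mod3_cases; cases a rule: int_mod3_cases)
    (simp_all add: Xs_residue_simps)

lemma Xs_catalan: "Xs (n + a) * Xs (n - a) - Xs n ^ 2 = - (Xs a ^ 2)"
  by (cases n rule: int_mod3_cases; cases a rule: int_mod3_cases)
    (simp_all add: Xs_residue_simps)

lemma Xs_catalan_succ: "Xs (n + a + 1) * Xs (n - a + 1) - Xs (n + 1) ^ 2 = - (Xs a ^ 2)"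
  by (cases n rule: int_mod3_cases; cases a rule: int_mod3_cases)
    (simp_all add: Xs_residue_simps)

lemma Xs_catalan_left:
  "Xs (n + a) * Xs (n - a + 1) - Xs n * Xs (n + 1) = Xs a ^ 2 + Xs a * Xs (a + 1)"
  by (cases n rule: int_mod3_cases; cases a rule: int_mod3_cases)
    (simp_all add: Xs_residue_simps)

lemma Xs_catalan_right:
  "Xs (n + a + 1) * Xs (n - a) - Xs n * Xs (n + 1) = - Xs a * Xs (a + 1)"
  by (cases n rule: int_mod3_cases; cases a rule: int_mod3_cases)
    (simp_all add: Xs_residue_simps)

definition jacobsthal3_recurrence :: "(int \<Rightarrow> real) \<Rightarrow> bool" where
  "jacobsthal3_recurrence f \<longleftrightarrow>
     (\<forall>m. f (m + 3) = f (m + 2) + f (m + 1) + 2 * f m)"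

lemma jacobsthal3_recurrence_unique:
  assumes "jacobsthal3_recurrence f" "jacobsthal3_recurrence g"
    and "f 0 = g 0" "f 1 = g 1" "f 2 = g 2"
  shows "f n = g n"
proof -
  define h where "h m = f m - g m" for m
  have rec: "h (m + 3) = h (m + 2) + h (m + 1) + 2 * h m" for m
    using assms(1,2) by (simp add: jacobsthal3_recurrence_def h_def)
  have "h k = 0 \<and> h (k + 1) = 0 \<and> h (k + 2) = 0" for k
  proof (induction k rule: int_induct[where k = 0])
    case base
    then show ?case using assms(3-5) by (simp add: h_def)
  next
    case (step1 i)
    then show ?case using rec[of i] by (simp add: add.assoc)
  next
    case (step2 i)
    then show ?case using rec[of "i - 1"] by (simp add: ac_simps)
  qed
  then show ?thesis by (simp add: h_def)
qed

lemma jacobsthal3_recurrenceI: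
  assumes f: "\<And>n. f n = (if n = 0 then x else if n = 1 then y else if n = 2 then z
      else if n > 2 then f (n - 1) + f (n - 2) + 2 * f (n - 3)
      else (f (n + 3) - f (n + 2) - f (n + 1)) / 2)"
  shows "jacobsthal3_recurrence f"
  unfolding jacobsthal3_recurrence_def
proof
  fix m :: int
  show "f (m + 3) = f (m + 2) + f (m + 1) + 2 * f m"
  proof (cases "m \<ge> 0")
    case True
    then show ?thesis by (subst f) (simp add: ac_simps)
  next
    case False
    then have "f m = (f (m + 3) - f (m + 2) - f (m + 1)) / 2"
      using f[of m] by simp
    then show ?thesis by simp
  qed
qed

lemma jacobsthal3_recurrence_binet:
  "jacobsthal3_recurrence (\<lambda>m. x * 2 powi m + y * Xs m + z * Xs (m + 1))"
  unfolding jacobsthal3_recurrence_def Xs_shifts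
  by (simp add: power_int_add algebra_simps)

lemma Jac3_binet: "Jac3 n = (2 * 2 powi n + Xs n - 2 * Xs (n + 1)) / 7"
proof -
  have "Jac3 n = 2 / 7 * 2 powi n + 1 / 7 * Xs n + (- 2 / 7) * Xs (n + 1)"
    by (rule jacobsthal3_recurrence_unique[OF jacobsthal3_recurrenceI[OF Jac3.simps]
          jacobsthal3_recurrence_binet])
      (simp_all add: Jac3.simps Xs_def)
  then show ?thesis by simp
qed

lemma MJac3_binet: "MJac3 n = 2 powi n + Xs n + 2 * Xs (n + 1)"
proof -
  have "MJac3 n = 1 * 2 powi n + 1 * Xs n + 2 * Xs (n + 1)"
    by (rule jacobsthal3_recurrence_unique[OF jacobsthal3_recurrenceI[OF MJac3.simps]
          jacobsthal3_recurrence_binet])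
      (simp_all add: MJac3.simps Xs_def)
  then show ?thesis by simp
qed

instantiation gq :: real_vector
begin

definition zero_gq :: gq where "0 = GQ 0 0 0 0"
definition plus_gq :: "gq \<Rightarrow> gq \<Rightarrow> gq" where "p + q = gadd p q"
definition minus_gq :: "gq \<Rightarrow> gq \<Rightarrow> gq" where "p - q = gsub p q"
definition uminus_gq :: "gq \<Rightarrow> gq" where "- q = gscale (- 1) q"
definition scaleR_gq :: "real \<Rightarrow> gq \<Rightarrow> gq" where "r *\<^sub>R q = gscale r q"

instance
  by standard (auto simp: zero_gq_def plus_gq_def minus_gq_def uminus_gq_def scaleR_gq_def
      gadd_def gsub_def gscale_def algebra_simps intro!: gq.expand)

end

lemma gq_vector_ops: "gadd p q = p + q" "gsub p q = p - q" "gscale r q = r *\<^sub>R q"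
  by (simp_all add: plus_gq_def minus_gq_def scaleR_gq_def)

lemma bilinear_gmul: "bilinear (gmul l1 l2 l3)"
  unfolding bilinear_def linear_iff
  by (auto simp: plus_gq_def scaleR_gq_def gmul_def gadd_def gscale_def algebra_simps)

definition Xs_comb :: "'a::real_vector \<Rightarrow> 'a \<Rightarrow> int \<Rightarrow> 'a" where
  "Xs_comb P Q m = Xs m *\<^sub>R P - Xs (m + 1) *\<^sub>R Q"

lemma JG_binet: "7 *\<^sub>R JG m = (2 * 2 powi m) *\<^sub>R Theta + Xs_comb qA qB m"
  unfolding JG_def Jac3_binet Xs_comb_def Theta_def qA_def qB_def Xs_shifts
  by (simp add: scaleR_gq_def plus_gq_def minus_gq_def gscale_def gadd_def gsub_def
      power_int_add field_simps)

lemma KG_binet: "KG m = 2 powi m *\<^sub>R Theta + Xs_comb qC qD m"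
  unfolding KG_def MJac3_binet Xs_comb_def Theta_def qC_def qD_def Xs_shifts
  by (simp add: scaleR_gq_def plus_gq_def minus_gq_def gscale_def gadd_def gsub_def
      power_int_add field_simps)

lemma bilinear_scaleR_add_expand:
  assumes "bilinear f"
  shows "f (x *\<^sub>R T + V) (y *\<^sub>R T + W) =
    (x * y) *\<^sub>R f T T + x *\<^sub>R f T W + y *\<^sub>R f V T + f V W"
  using assms by (simp add: bilinear_ladd bilinear_radd bilinear_lmul bilinear_rmul)

lemma bilinear_catalan_geometric:
  assumes f: "bilinear f" and G: "\<And>m. G m = (c * 2 powi m) *\<^sub>R T + V m"
  shows "f (G (n + a)) (G (n - a)) - f (G n) (G n) =
    (c * 2 powi n) *\<^sub>R (f T (2 powi a *\<^sub>R V (n - a) - V n)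
                        - 2 powi (- a) *\<^sub>R f (2 powi a *\<^sub>R V n - V (n + a)) T)
    + (f (V (n + a)) (V (n - a)) - f (V n) (V n))"
proof -
  have pow: "(2::real) powi (n + a) = 2 powi n * 2 powi a"
    "(2::real) powi (n - a) = 2 powi n * 2 powi (- a)" "(2::real) powi (- a) * 2 powi a = 1"
    by (simp_all add: power_int_add power_int_diff power_int_minus field_simps)
  show ?thesis
    unfolding G bilinear_scaleR_add_expand[OF f] pow(1,2)
    using f pow(3)
    by (simp add: bilinear_lsub bilinear_rsub bilinear_lmul bilinear_rmul algebra_simps)
qed

lemma bilinear_Xs_comb:
  assumes "bilinear f"
  shows "f (Xs_comb P Q k) (Xs_comb P Q m) =
    (Xs k * Xs m) *\<^sub>R f P P - (Xs k * Xs (m + 1)) *\<^sub>R f P Q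
    - (Xs (k + 1) * Xs m) *\<^sub>R f Q P + (Xs (k + 1) * Xs (m + 1)) *\<^sub>R f Q Q"
  using assms
  by (simp add: Xs_comb_def bilinear_lsub bilinear_rsub bilinear_lmul bilinear_rmul algebra_simps)

lemma bilinear_catalan_Xs_comb:
  assumes f: "bilinear f"
  shows "f (Xs_comb P Q (n + a)) (Xs_comb P Q (n - a)) - f (Xs_comb P Q n) (Xs_comb P Q n) =
    (Xs a * Xs (a + 1)) *\<^sub>R (f Q P - f P Q) - Xs a ^ 2 *\<^sub>R (f P P + f P Q + f Q Q)"
proof -
  have "f (Xs_comb P Q (n + a)) (Xs_comb P Q (n - a)) - f (Xs_comb P Q n) (Xs_comb P Q n) =
      (Xs (n + a) * Xs (n - a) - Xs n ^ 2) *\<^sub>R f P P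
    - (Xs (n + a) * Xs (n - a + 1) - Xs n * Xs (n + 1)) *\<^sub>R f P Q
    - (Xs (n + a + 1) * Xs (n - a) - Xs n * Xs (n + 1)) *\<^sub>R f Q P
    + (Xs (n + a + 1) * Xs (n - a + 1) - Xs (n + 1) ^ 2) *\<^sub>R f Q Q"
    unfolding bilinear_Xs_comb[OF f] by (simp add: power2_eq_square algebra_simps)
  also have "\<dots> =
      (Xs a * Xs (a + 1)) *\<^sub>R (f Q P - f P Q) - Xs a ^ 2 *\<^sub>R (f P P + f P Q + f Q Q)"
    unfolding Xs_catalan Xs_catalan_succ Xs_catalan_left Xs_catalan_right
    by (simp add: algebra_simps)
  finally show ?thesis .
qed

lemma Yg_eq_Xs_comb: "Yg P Q m a = 2 powi a *\<^sub>R Xs_comb P Q m - Xs_comb P Q (m + a)"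
  unfolding Yg_def gq_vector_ops Xs_comb_def Xs_add_plus_one[of m a] Xs_add[of m a]
  by (simp add: algebra_simps)

lemma bilinear_catalan_binet:
  fixes G :: "int \<Rightarrow> gq"
  assumes f: "bilinear f" and G: "\<And>m. G m = (c * 2 powi m) *\<^sub>R T + Xs_comb P Q m"
  shows "f (G (n + a)) (G (n - a)) - f (G n) (G n) =
    (c * 2 powi n) *\<^sub>R (f T (Yg P Q (n - a) a) - 2 powi (- a) *\<^sub>R f (Yg P Q n a) T)
    - Xs a *\<^sub>R (Xs a *\<^sub>R (f P P + f P Q + f Q Q) - Xs (a + 1) *\<^sub>R (f Q P - f P Q))"
  unfolding bilinear_catalan_geometric[OF f G] bilinear_catalan_Xs_comb[OF f] Yg_eq_Xs_comb
  by (simp add: algebra_simps power2_eq_square)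

lemma gmul_qB_qA_commute:
  "gmul l1 l2 l3 qB qA - gmul l1 l2 l3 qA qB = 14 *\<^sub>R Omega l1 l2 l3"
  by (simp add: gmul_def qA_def qB_def Omega_def minus_gq_def scaleR_gq_def gsub_def gscale_def
      algebra_simps)

lemma gmul_qD_qC_commute:
  "gmul l1 l2 l3 qD qC - gmul l1 l2 l3 qC qD = 6 *\<^sub>R Omega l1 l2 l3"
  by (simp add: gmul_def qC_def qD_def Omega_def minus_gq_def scaleR_gq_def gsub_def gscale_def
      algebra_simps)

lemma JG_catalan:
  "gmul l1 l2 l3 (JG (n + a)) (JG (n - a)) - gmul l1 l2 l3 (JG n) (JG n) =
   (1 / 49) *\<^sub>R (2 powi (n + 1) *\<^sub>R (gmul l1 l2 l3 Theta (Y (n - a) a)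
        - 2 powi (- a) *\<^sub>R gmul l1 l2 l3 (Y n a) Theta)
     - Xs a *\<^sub>R (Xs a *\<^sub>R Xi l1 l2 l3 - (14 * Xs (a + 1)) *\<^sub>R Omega l1 l2 l3))"
proof -
  let ?f = "gmul l1 l2 l3" and ?G = "\<lambda>m. 7 *\<^sub>R JG m"
  have "?f (JG (n + a)) (JG (n - a)) - ?f (JG n) (JG n) =
      (1 / 49) *\<^sub>R (?f (?G (n + a)) (?G (n - a)) - ?f (?G n) (?G n))"
    using bilinear_gmul by (simp add: bilinear_lmul bilinear_rmul scaleR_diff_right)
  also have "\<dots> = (1 / 49) *\<^sub>R (2 powi (n + 1) *\<^sub>R (?f Theta (Y (n - a) a)
        - 2 powi (- a) *\<^sub>R ?f (Y n a) Theta)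
     - Xs a *\<^sub>R (Xs a *\<^sub>R Xi l1 l2 l3 - (14 * Xs (a + 1)) *\<^sub>R Omega l1 l2 l3))"
    unfolding bilinear_catalan_binet[where G = ?G, OF bilinear_gmul JG_binet] Y_def Xi_def
      gq_vector_ops gmul_qB_qA_commute
    by (simp add: power_int_add mult.commute)
  finally show ?thesis .
qed

lemma KG_catalan:
  "gmul l1 l2 l3 (KG (n + a)) (KG (n - a)) - gmul l1 l2 l3 (KG n) (KG n) =
   2 powi n *\<^sub>R (gmul l1 l2 l3 Theta (Ystar (n - a) a)
        - 2 powi (- a) *\<^sub>R gmul l1 l2 l3 (Ystar n a) Theta)
     - Xs a *\<^sub>R (Xs a *\<^sub>R Xistar l1 l2 l3 - (6 * Xs (a + 1)) *\<^sub>R Omega l1 l2 l3)"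
proof -
  have KG: "KG m = (1 * 2 powi m) *\<^sub>R Theta + Xs_comb qC qD m" for m
    by (simp add: KG_binet)
  show ?thesis
    unfolding bilinear_catalan_binet[OF bilinear_gmul KG] Ystar_def Xistar_def
      gq_vector_ops gmul_qD_qC_commute
    by simp
qed

theorem corollary3p2:
  fixes l1 l2 l3 :: real and n a :: int
  assumes "n \<ge> a"
  shows "gsub (gmul l1 l2 l3 (JG (n + a)) (JG (n - a))) (gmul l1 l2 l3 (JG n) (JG n)) =
           gscale (1 / 49)
             (gsub (gscale (2 powi (n + 1))
                      (gsub (gmul l1 l2 l3 Theta (Y (n - a) a))
                            (gscale (2 powi (- a)) (gmul l1 l2 l3 (Y n a) Theta))))
                   (gscale (Xs a) (gsub (gscale (Xs a) (Xi l1 l2 l3))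
                                        (gscale (14 * Xs (a + 1)) (Omega l1 l2 l3)))))
    \<and> gsub (gmul l1 l2 l3 (KG (n + a)) (KG (n - a))) (gmul l1 l2 l3 (KG n) (KG n)) =
           gsub (gscale (2 powi n)
                   (gsub (gmul l1 l2 l3 Theta (Ystar (n - a) a))
                         (gscale (2 powi (- a)) (gmul l1 l2 l3 (Ystar n a) Theta))))
                (gscale (Xs a) (gsub (gscale (Xs a) (Xistar l1 l2 l3))
                                     (gscale (6 * Xs (a + 1)) (Omega l1 l2 l3))))"
  unfolding gq_vector_ops using JG_catalan KG_catalan by blast

end
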